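(* Let $n$ be a positive integer, $\psi$ analytic on $\mathbb D$ and $\varphi$ an analytic self-map of $\mathbb D$ such that $D_{\psi,\varphi,n}$ is bounded on $H^2$, and suppose $w\in\mathbb D$ with $\varphi(w)=w$. Define $\chi$ on $\mathbb D$ by: $\chi=\psi$ if $\psi^{(j)}(w)=0$ for all $0\le j\le n-1$; $\chi(z)=\psi(z)\big(\frac{w-z}{1-\overline{w}z}\big)^{n-m}$ if $\psi^{(j)}(w)=0$ for $0\le j\le m-1$ and $\psi^{(m)}(w)\ne0$ for some $1\le m<n$; and $\chi(z)=\psi(z)\big(\frac{w-z}{1-\overline{w}z}\big)^{n}$ if $\psi(w)\ne0$. Let $N=\big\lfloor\frac{n}{1-|\varphi'(w)|}\big\rfloor$. Then: (i) if $\varphi'(w)\ne0$, then $\|D_{\psi,\varphi,n}\|_{-1}\ge|\chi^{(n)}(w)|\binom{N}{n}|\varphi'(w)|^{N-n}$; (ii) if $\varphi'(w)=0$, then $\|D_{\psi,\varphi,n}\|_{-1}\ge|\chi^{(n)}(w)|$; (iii) if $\varphi'(w)=0$, $\psi''(w)=0$ and $n=1$, then $\|D_{\psi,\varphi,1}\|_{-1}\ge\max\{|\chi'(w)|,\ |\psi(w)\varphi''(w)|\}$.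
   Context: $H^2$ is the Hardy space of analytic $f$ on the open unit disk $\mathbb D$ with $\|f\|^2=\sup_{0<r<1}\frac1{2\pi}\int_0^{2\pi}|f(re^{i\theta})|^2d\theta<\infty$. $D_{\psi,\varphi,n}f=\psi\cdot(f^{(n)}\circ\varphi)$, and $\|T\|_{-1}$ denotes the operator norm of $T$ on $H^2$. $\lfloor\cdot\rfloor$ is the greatest integer function. *)

theory Defs
  imports "HOL-Analysis.Analysis"
begin

definition H2_mean :: "(complex \<Rightarrow> complex) \<Rightarrow> real \<Rightarrow> real" where
  "H2_mean f r = (1 / (2 * pi)) * integral {0..2*pi} (\<lambda>\<theta>. (cmod (f (of_real r * cis \<theta>)))\<^sup>2)"

definition H2 :: "(complex \<Rightarrow> complex) set" where
  "H2 = {f. f holomorphic_on ball 0 1 \<and> bdd_above (H2_mean f ` {0<..<1})}"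

definition H2_norm :: "(complex \<Rightarrow> complex) \<Rightarrow> real" where
  "H2_norm f = sqrt (SUP r\<in>{0<..<1}. H2_mean f r)"

definition Dop :: "(complex \<Rightarrow> complex) \<Rightarrow> (complex \<Rightarrow> complex) \<Rightarrow> nat
    \<Rightarrow> (complex \<Rightarrow> complex) \<Rightarrow> (complex \<Rightarrow> complex)" where
  "Dop \<psi> \<phi> n f = (\<lambda>z. \<psi> z * (deriv ^^ n) f (\<phi> z))"

definition bounded_on_H2 :: "((complex \<Rightarrow> complex) \<Rightarrow> (complex \<Rightarrow> complex)) \<Rightarrow> bool" where
  "bounded_on_H2 T \<longleftrightarrow> (\<forall>f\<in>H2. T f \<in> H2) \<and> (\<exists>C. \<forall>f\<in>H2. H2_norm (T f) \<le> C * H2_norm f)"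

definition H2_opnorm :: "((complex \<Rightarrow> complex) \<Rightarrow> (complex \<Rightarrow> complex)) \<Rightarrow> real" where
  "H2_opnorm T = Sup {H2_norm (T f) | f. f \<in> H2 \<and> H2_norm f \<le> 1}"

definition chi :: "(complex \<Rightarrow> complex) \<Rightarrow> nat \<Rightarrow> complex \<Rightarrow> (complex \<Rightarrow> complex)" where
  "chi \<psi> n w =
    (if (\<forall>j<n. (deriv ^^ j) \<psi> w = 0) then \<psi>
     else if \<psi> w \<noteq> 0 then (\<lambda>z. \<psi> z * ((w - z) / (1 - cnj w * z)) ^ n)
     else (let m = (LEAST m. (deriv ^^ m) \<psi> w \<noteq> 0)
           in (\<lambda>z. \<psi> z * ((w - z) / (1 - cnj w * z)) ^ (n - m))))"

end

theory Submission
  imports Defs "HOL-Complex_Analysis.Riemann_Mapping"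
begin

(* Say that h has a power factor (k, c) at w if h = (z - w)^k q on the disk with q(w) = c.
   If \<psi> and \<phi> - w have power factors (a, \<alpha>) and (b, \<beta>), then D = D_{\<psi>,\<phi>,n} maps functions
   with power factor (K, c) to functions with power factor (a + b(K - n), \<mu> c), where
   \<mu> = K!/(K-n)! \<alpha> \<beta>^(K-n). When a + b(K - n) = K, iterating D on ((z - w)/2)^K and bounding
   the K-th derivative at w by a Cauchy estimate |h^(K)(w)| \<le> C ||h|| gives |\<mu>|^j \<le> C' ||D||^j
   for all j, hence |\<mu>| \<le> ||D||.
   Multiplying \<psi> by a power of the Blaschke factor of w does not increase the bound on D, and
   turns \<psi> into \<chi>, which vanishes to order n at w; the choice a = n, b = 1 gives (i) and (ii),
   and a = 0, b = 2, K = 2, n = 1 gives the second bound in (iii). *)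

definition has_power_factor :: "complex \<Rightarrow> nat \<Rightarrow> complex \<Rightarrow> (complex \<Rightarrow> complex) \<Rightarrow> bool" where
  "has_power_factor w k c h \<longleftrightarrow>
     (\<exists>q. q holomorphic_on ball 0 1 \<and> q w = c \<and> (\<forall>z\<in>ball 0 1. h z = (z - w) ^ k * q z))"

lemma has_power_factor_holomorphic:
  assumes "has_power_factor w k c h"
  shows "h holomorphic_on ball 0 1"
proof -
  obtain q where q: "q holomorphic_on ball 0 1" and h: "\<forall>z\<in>ball 0 1. h z = (z - w) ^ k * q z"
    using assms unfolding has_power_factor_def by blast
  have "(\<lambda>z. (z - w) ^ k * q z) holomorphic_on ball 0 1"
    using q by (intro holomorphic_intros)
  then show ?thesis
    by (rule holomorphic_transform) (use h in auto)
qed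

lemma has_power_factor_0:
  "h holomorphic_on ball 0 1 \<Longrightarrow> has_power_factor w 0 (h w) h"
  unfolding has_power_factor_def by auto

lemma has_power_factor_mult:
  assumes "has_power_factor w a \<alpha> f" "has_power_factor w b \<beta> g"
  shows "has_power_factor w (a + b) (\<alpha> * \<beta>) (\<lambda>z. f z * g z)"
proof -
  obtain p q where "p holomorphic_on ball 0 1" "p w = \<alpha>" "\<forall>z\<in>ball 0 1. f z = (z - w) ^ a * p z"
    and "q holomorphic_on ball 0 1" "q w = \<beta>" "\<forall>z\<in>ball 0 1. g z = (z - w) ^ b * q z"
    using assms unfolding has_power_factor_def by blast
  then show ?thesis
    unfolding has_power_factor_def
    by (intro exI[of _ "\<lambda>z. p z * q z"]) (auto intro!: holomorphic_intros simp: power_add mult_ac)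
qed

lemma has_power_factor_power:
  assumes "has_power_factor w b \<beta> g"
  shows "has_power_factor w (b * e) (\<beta> ^ e) (\<lambda>z. g z ^ e)"
proof (induction e)
  case 0
  show ?case using has_power_factor_0[of "\<lambda>z. 1"] by simp
next
  case (Suc e)
  show ?case using has_power_factor_mult[OF assms Suc.IH] by simp
qed

lemma has_power_factor_compose:
  assumes h: "has_power_factor w k c h" and \<phi>: "has_power_factor w b \<beta> (\<lambda>z. \<phi> z - w)"
    and \<phi>_self: "\<phi> ` ball 0 1 \<subseteq> ball 0 1" and fix_w: "\<phi> w = w"
  shows "has_power_factor w (b * k) (\<beta> ^ k * c) (\<lambda>z. h (\<phi> z))"
proof -
  obtain q where q: "q holomorphic_on ball 0 1" "q w = c" "\<forall>z\<in>ball 0 1. h z = (z - w) ^ k * q z"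
    using h unfolding has_power_factor_def by blast
  obtain p where p: "p holomorphic_on ball 0 1" "p w = \<beta>" "\<forall>z\<in>ball 0 1. \<phi> z - w = (z - w) ^ b * p z"
    using \<phi> unfolding has_power_factor_def by blast
  have "(\<lambda>z. (\<phi> z - w) + w) holomorphic_on ball 0 1"
    using has_power_factor_holomorphic[OF \<phi>] by (rule holomorphic_on_add[OF _ holomorphic_on_const])
  then have \<phi>_hol: "\<phi> holomorphic_on ball 0 1"
    by (rule holomorphic_transform) simp
  have "(q \<circ> \<phi>) holomorphic_on ball 0 1"
    by (rule holomorphic_on_compose_gen[OF \<phi>_hol q(1) \<phi>_self])
  moreover have "h (\<phi> z) = (z - w) ^ (b * k) * (p z ^ k * q (\<phi> z))" if "z \<in> ball 0 1" for z
  proof -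
    have "\<phi> z \<in> ball 0 1" using \<phi>_self that by blast
    then have "h (\<phi> z) = ((z - w) ^ b * p z) ^ k * q (\<phi> z)"
      using q(3) p(3) that by simp
    then show ?thesis by (simp add: power_mult_distrib power_mult mult_ac)
  qed
  ultimately show ?thesis
    unfolding has_power_factor_def using p q fix_w
    by (intro exI[of _ "\<lambda>z. p z ^ k * q (\<phi> z)"]) (auto intro!: holomorphic_intros simp: o_def)
qed

lemma has_power_factor_deriv:
  assumes "has_power_factor w (Suc k) c h"
  shows "has_power_factor w k (of_nat (Suc k) * c) (deriv h)"
proof -
  obtain q where q: "q holomorphic_on ball 0 1" "q w = c" and h: "\<forall>z\<in>ball 0 1. h z = (z - w) ^ Suc k * q z"
    using assms unfolding has_power_factor_def by blast
  have "deriv h z = (z - w) ^ k * (of_nat (Suc k) * q z + (z - w) * deriv q z)"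
    if z: "z \<in> ball 0 1" for z
  proof -
    have "eventually (\<lambda>x. h x = (x - w) ^ Suc k * q x) (nhds z)"
      using h by (intro eventually_mono[OF eventually_nhds_in_open[OF open_ball z]]) blast
    then have "deriv h z = deriv (\<lambda>x. (x - w) ^ Suc k * q x) z"
      by (rule deriv_cong_ev) simp
    also have "\<dots> = of_nat (Suc k) * (z - w) ^ k * q z + (z - w) ^ Suc k * deriv q z"
    proof (rule DERIV_imp_deriv)
      have dq: "(q has_field_derivative deriv q z) (at z)"
        using q(1) z holomorphic_derivI by blast
      show "((\<lambda>x. (x - w) ^ Suc k * q x) has_field_derivative
          of_nat (Suc k) * (z - w) ^ k * q z + (z - w) ^ Suc k * deriv q z) (at z)"
        by (rule derivative_eq_intros dq refl | simp)+
    qed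
    finally show ?thesis by (simp add: algebra_simps)
  qed
  then show ?thesis
    unfolding has_power_factor_def using q
    by (intro exI[of _ "\<lambda>z. of_nat (Suc k) * q z + (z - w) * deriv q z"])
       (auto intro!: holomorphic_intros holomorphic_deriv)
qed

lemma has_power_factor_higher_deriv:
  assumes "has_power_factor w k c h" "j \<le> k"
  shows "has_power_factor w (k - j) (fact k / fact (k - j) * c) ((deriv ^^ j) h)"
  using assms(2)
proof (induction j)
  case 0
  show ?case using assms(1) by simp
next
  case (Suc j)
  define m where "m = k - Suc j"
  have k: "k - j = Suc m" using Suc.prems unfolding m_def by simp
  have "of_nat (Suc m) * (fact k / fact (Suc m) * c) = fact k / fact m * c"
    by (simp add: field_simps del: of_nat_Suc)
  then have "of_nat (Suc (k - Suc j)) * (fact k / fact (k - j) * c) = fact k / fact (k - Suc j) * c"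
    unfolding k m_def .
  moreover have "has_power_factor w (k - Suc j)
      (of_nat (Suc (k - Suc j)) * (fact k / fact (k - j) * c)) (deriv ((deriv ^^ j) h))"
    by (rule has_power_factor_deriv) (use Suc k m_def in simp)
  ultimately show ?case by simp
qed

lemma higher_deriv_has_power_factor:
  assumes "has_power_factor w k c h" "w \<in> ball 0 1"
  shows "(deriv ^^ k) h w = fact k * c"
  using has_power_factor_higher_deriv[OF assms(1) order_refl] assms(2)
  unfolding has_power_factor_def by auto

lemma has_power_factor_Taylor:
  assumes h: "h holomorphic_on ball 0 1" and w: "w \<in> ball 0 1"
    and vanish: "\<And>j. j < k \<Longrightarrow> (deriv ^^ j) h w = 0"
  shows "has_power_factor w k ((deriv ^^ k) h w / fact k) h"
  using vanish
proof (induction k)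
  case 0
  show ?case using has_power_factor_0[OF h] by simp
next
  case (Suc k)
  then obtain q where q: "q holomorphic_on ball 0 1" "q w = 0" "\<forall>z\<in>ball 0 1. h z = (z - w) ^ k * q z"
    unfolding has_power_factor_def by auto
  define q' where "q' = (\<lambda>z. if z = w then deriv q w else (q z - q w) / (z - w))"
  have "q' holomorphic_on ball 0 1"
    unfolding q'_def using pole_lemma_open[OF q(1) open_ball] by simp
  moreover have "\<forall>z\<in>ball 0 1. h z = (z - w) ^ Suc k * q' z"
    using q by (auto simp: q'_def)
  ultimately have "has_power_factor w (Suc k) (q' w) h"
    unfolding has_power_factor_def by blast
  moreover from this have "(deriv ^^ Suc k) h w / fact (Suc k) = q' w"
    using higher_deriv_has_power_factor[OF _ w] by (simp only: nonzero_mult_div_cancel_left[OF fact_nonzero])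
  ultimately show ?case by simp
qed

lemma H2_holomorphic: "f \<in> H2 \<Longrightarrow> f holomorphic_on ball 0 1"
  by (simp add: H2_def)

lemma H2_mean_nonneg: "0 \<le> H2_mean f r"
proof -
  have "0 \<le> integral {0..2*pi} (\<lambda>\<theta>. (cmod (f (of_real r * cis \<theta>)))\<^sup>2)"
    by (cases "(\<lambda>\<theta>. (cmod (f (of_real r * cis \<theta>)))\<^sup>2) integrable_on {0..2*pi}")
       (auto intro: integral_nonneg simp: not_integrable_integral)
  then show ?thesis unfolding H2_mean_def by simp
qed

lemma circle_in_unit_disk: "0 < r \<Longrightarrow> r < 1 \<Longrightarrow> of_real r * cis t \<in> ball (0::complex) 1"
  by (simp add: norm_mult)

lemma H2_norm_cong:
  assumes "\<And>z. z \<in> ball 0 1 \<Longrightarrow> f z = g z"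
  shows "H2_norm f = H2_norm g"
proof -
  have "H2_mean f r = H2_mean g r" if "r \<in> {0<..<1}" for r
    unfolding H2_mean_def using assms circle_in_unit_disk that
    by (intro arg_cong2[where f="(*)"] refl integral_cong) auto
  then have "H2_mean f ` {0<..<1} = H2_mean g ` {0<..<1}"
    by (rule image_cong[OF refl])
  then show ?thesis unfolding H2_norm_def by simp
qed

lemma H2_mean_le_SUP:
  assumes "f \<in> H2" "0 < r" "r < 1"
  shows "H2_mean f r \<le> (SUP r\<in>{0<..<1}. H2_mean f r)"
  using assms by (intro cSUP_upper) (auto simp: H2_def)

lemma H2_norm_nonneg:
  assumes "f \<in> H2"
  shows "0 \<le> H2_norm f"
  using H2_mean_le_SUP[OF assms, of "1/2"] H2_mean_nonneg[of f "1/2"] unfolding H2_norm_def by simp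

lemma H2_mean_le_H2_norm:
  assumes "f \<in> H2" "0 < r" "r < 1"
  shows "H2_mean f r \<le> H2_norm f ^ 2"
  using H2_mean_le_SUP[OF assms] H2_mean_le_SUP[OF assms(1), of "1/2"] H2_mean_nonneg[of f "1/2"]
  unfolding H2_norm_def by simp

lemma H2_norm_le_of_H2_mean_le:
  assumes "\<And>r. 0 < r \<Longrightarrow> r < 1 \<Longrightarrow> H2_mean f r \<le> B ^ 2" "0 \<le> B"
  shows "bdd_above (H2_mean f ` {0<..<1})" "H2_norm f \<le> B"
proof -
  show "bdd_above (H2_mean f ` {0<..<1})"
    using assms(1) by (intro bdd_aboveI2) auto
  have "(SUP r\<in>{0<..<1}. H2_mean f r) \<le> B ^ 2"
    using assms(1) by (intro cSUP_least) auto
  then show "H2_norm f \<le> B"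
    unfolding H2_norm_def using assms(2) real_le_lsqrt by (simp add: real_sqrt_le_iff)
qed

lemma integrable_norm_sq_circle:
  assumes "continuous_on (ball 0 1) f" "0 < r" "r < 1"
  shows "(\<lambda>t. (cmod (f (of_real r * cis t)))\<^sup>2) integrable_on {a..b}"
proof -
  have "continuous_on {a..b} (\<lambda>t. f (of_real r * cis t))"
    by (rule continuous_on_compose2[OF assms(1)])
       (use assms circle_in_unit_disk in \<open>auto intro!: continuous_intros\<close>)
  then show ?thesis
    by (intro integrable_continuous_interval continuous_intros)
qed

lemma H2_mult_bounded:
  assumes f: "f \<in> H2" and \<beta>: "\<beta> holomorphic_on ball 0 1"
    and bound: "\<And>z. z \<in> ball 0 1 \<Longrightarrow> cmod (\<beta> z) \<le> B"
  shows "(\<lambda>z. \<beta> z * f z) \<in> H2" "H2_norm (\<lambda>z. \<beta> z * f z) \<le> B * H2_norm f"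
proof -
  have B: "0 \<le> B" using order_trans[OF norm_ge_zero bound, of 0] by simp
  have f_hol: "f holomorphic_on ball 0 1" using f by (rule H2_holomorphic)
  have \<beta>f_hol: "(\<lambda>z. \<beta> z * f z) holomorphic_on ball 0 1"
    using f_hol \<beta> by (intro holomorphic_intros)
  have mean: "H2_mean (\<lambda>z. \<beta> z * f z) r \<le> (B * H2_norm f) ^ 2" if r: "0 < r" "r < 1" for r
  proof -
    have "integral {0..2*pi} (\<lambda>t. (cmod (\<beta> (of_real r * cis t) * f (of_real r * cis t)))\<^sup>2)
        \<le> integral {0..2*pi} (\<lambda>t. B\<^sup>2 * (cmod (f (of_real r * cis t)))\<^sup>2)"
    proof (rule integral_le)
      show "(\<lambda>t. (cmod (\<beta> (of_real r * cis t) * f (of_real r * cis t)))\<^sup>2) integrable_on {0..2*pi}"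
        using integrable_norm_sq_circle[OF holomorphic_on_imp_continuous_on[OF \<beta>f_hol] r] by simp
      show "(\<lambda>t. B\<^sup>2 * (cmod (f (of_real r * cis t)))\<^sup>2) integrable_on {0..2*pi}"
        using integrable_cmul[OF integrable_norm_sq_circle[OF holomorphic_on_imp_continuous_on[OF f_hol] r]]
        by simp
      fix t
      have "cmod (\<beta> (of_real r * cis t)) \<le> B" using bound circle_in_unit_disk r by blast
      then show "(cmod (\<beta> (of_real r * cis t) * f (of_real r * cis t)))\<^sup>2 \<le> B\<^sup>2 * (cmod (f (of_real r * cis t)))\<^sup>2"
        by (simp add: norm_mult power_mult_distrib mult_right_mono power_mono)
    qed
    then have "H2_mean (\<lambda>z. \<beta> z * f z) r \<le> B\<^sup>2 * H2_mean f r"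
      unfolding H2_mean_def by (simp add: divide_right_mono)
    also have "\<dots> \<le> B\<^sup>2 * H2_norm f ^ 2"
      using H2_mean_le_H2_norm[OF f r] by (simp add: mult_left_mono)
    finally show ?thesis by (simp add: power_mult_distrib)
  qed
  have "0 \<le> B * H2_norm f" using B H2_norm_nonneg[OF f] by simp
  note bounds = H2_norm_le_of_H2_mean_le[of "\<lambda>z. \<beta> z * f z", OF mean this]
  show "(\<lambda>z. \<beta> z * f z) \<in> H2"
    using bounds(1) \<beta>f_hol unfolding H2_def by simp
  show "H2_norm (\<lambda>z. \<beta> z * f z) \<le> B * H2_norm f"
    using bounds(2) by simp
qed

lemma H2_const: "(\<lambda>z. c) \<in> H2"
proof -
  have "H2_mean (\<lambda>z. c) r = (cmod c)\<^sup>2" for r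
    unfolding H2_mean_def by simp
  then show ?thesis unfolding H2_def by auto
qed

lemma integral_circlepath_eq_H2_mean:
  "integral {0..1} (\<lambda>t. (cmod (h (circlepath 0 \<rho> t)))\<^sup>2) = H2_mean h \<rho>"
proof -
  define g where "g = (\<lambda>\<theta>. (cmod (h (of_real \<rho> * cis \<theta>)))\<^sup>2)"
  have circle: "circlepath 0 \<rho> t = of_real \<rho> * cis (2 * pi * t)" for t
    by (simp add: circlepath cis_conv_exp mult_ac)
  have "integral ((\<lambda>x. x / (2 * pi)) ` {0..2 * pi}) (\<lambda>x. g (2 * pi * x))
      = (1 / \<bar>2 * pi\<bar>) *\<^sub>R integral {0..2 * pi} g"
    by (rule integral_stretch_real) simp
  moreover have "(\<lambda>x. x / (2 * pi)) ` {0..2 * pi} = {0..1}" by simp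
  ultimately show ?thesis unfolding H2_mean_def g_def circle by simp
qed

lemma integral_norm_le_amgm:
  fixes g :: "real \<Rightarrow> 'a::real_normed_vector"
  assumes g: "continuous_on {0..1} g" and s: "0 < s"
  shows "integral {0..1} (\<lambda>t. norm (g t)) \<le> (s * integral {0..1} (\<lambda>t. (norm (g t))\<^sup>2) + 1 / s) / 2"
proof -
  have int: "(\<lambda>t. (norm (g t))\<^sup>2) integrable_on {0..1}"
    by (intro integrable_continuous_interval continuous_intros g)
  have "integral {0..1} (\<lambda>t. norm (g t)) \<le> integral {0..1} (\<lambda>t. (s * (norm (g t))\<^sup>2 + 1 / s) / 2)"
  proof (rule integral_le)
    show "(\<lambda>t. norm (g t)) integrable_on {0..1}"
      by (intro integrable_continuous_interval continuous_intros g)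
    show "(\<lambda>t. (s * (norm (g t))\<^sup>2 + 1 / s) / 2) integrable_on {0..1}"
      by (intro integrable_continuous_interval continuous_intros g) auto
    fix t
    have "0 \<le> (s * norm (g t) - 1)\<^sup>2 / s" using s by simp
    then show "norm (g t) \<le> (s * (norm (g t))\<^sup>2 + 1 / s) / 2"
      using s by (simp add: field_simps power2_eq_square)
  qed
  also have "\<dots> = (s * integral {0..1} (\<lambda>t. (norm (g t))\<^sup>2) + 1 / s) / 2"
    using integral_add[OF integrable_cmul[OF int, of s] integrable_const_ivl[of "1 / s" 0 1]]
    by simp
  finally show ?thesis .
qed

lemma continuous_on_circlepath_compose:
  assumes "continuous_on (cball 0 \<rho>) h" "0 \<le> \<rho>"
  shows "continuous_on {0..1} (\<lambda>t. h (circlepath 0 \<rho> t))"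
  using assms(2) path_circlepath[of 0 \<rho>] unfolding path_def
  by (intro continuous_on_compose2[OF assms(1)]) (auto simp: path_image_def[symmetric])

lemma norm_higher_deriv_le_circle_integral:
  assumes cont: "continuous_on (cball 0 \<rho>) h" and hol: "h holomorphic_on ball 0 \<rho>"
    and w: "w \<in> ball 0 \<rho>"
  shows "cmod ((deriv ^^ K) h w)
    \<le> fact K * \<rho> / (\<rho> - cmod w) ^ Suc K * integral {0..1} (\<lambda>t. cmod (h (circlepath 0 \<rho> t)))"
proof -
  define \<delta> where "\<delta> = \<rho> - cmod w"
  have "0 \<le> cmod w" "cmod w < \<rho>" using w by auto
  then have \<delta>: "0 < \<delta>" and \<rho>: "0 < \<rho>"
    unfolding \<delta>_def by linarith+
  define G where "G = (\<lambda>t. h (circlepath 0 \<rho> t) / (circlepath 0 \<rho> t - w) ^ Suc K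
                             * vector_derivative (circlepath 0 \<rho>) (at t))"
  have G: "(G has_integral (2 * pi * \<i> / fact K * (deriv ^^ K) h w)) {0..1}"
    using Cauchy_has_contour_integral_higher_derivative_circlepath[OF cont hol w]
    unfolding has_contour_integral G_def .
  have hc: "continuous_on {0..1} (\<lambda>t. h (circlepath 0 \<rho> t))"
    using \<rho> by (intro continuous_on_circlepath_compose[OF cont]) simp
  have bound: "norm (G t) \<le> 2 * pi * \<rho> / \<delta> ^ Suc K * cmod (h (circlepath 0 \<rho> t))" for t
  proof -
    have "vector_derivative (circlepath 0 \<rho>) (at t) = 2 * pi * \<i> * \<rho> * exp (2 * of_real pi * \<i> * t)"
      by (rule vector_derivative_at) (rule has_vector_derivative_circlepath)
    then have deriv: "norm (vector_derivative (circlepath 0 \<rho>) (at t)) = 2 * pi * \<rho>"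
      using \<rho> by (simp add: norm_mult)
    have "norm (circlepath 0 \<rho> t) = \<rho>" using \<rho> by (simp add: circlepath norm_mult)
    then have "\<delta> \<le> norm (circlepath 0 \<rho> t - w)"
      using norm_triangle_ineq2[of "circlepath 0 \<rho> t" w] unfolding \<delta>_def by linarith
    then have "\<delta> ^ Suc K \<le> norm (circlepath 0 \<rho> t - w) ^ Suc K"
      using \<delta> by (intro power_mono) auto
    moreover have "0 < \<delta> ^ Suc K" using \<delta> by simp
    ultimately have "cmod (h (circlepath 0 \<rho> t)) / norm (circlepath 0 \<rho> t - w) ^ Suc K
        \<le> cmod (h (circlepath 0 \<rho> t)) / \<delta> ^ Suc K"
      by (intro divide_left_mono mult_pos_pos) (auto simp del: power_Suc)
    then have "2 * pi * \<rho> * (cmod (h (circlepath 0 \<rho> t)) / norm (circlepath 0 \<rho> t - w) ^ Suc K)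
        \<le> 2 * pi * \<rho> * (cmod (h (circlepath 0 \<rho> t)) / \<delta> ^ Suc K)"
      using \<rho> by (intro mult_left_mono) auto
    then show ?thesis
      unfolding G_def using deriv by (simp add: norm_mult norm_divide norm_power mult_ac del: power_Suc)
  qed
  have "2 * pi / fact K * cmod ((deriv ^^ K) h w) = norm (integral {0..1} G)"
    using integral_unique[OF G] by (simp add: norm_mult norm_divide)
  also have "\<dots> \<le> integral {0..1} (\<lambda>t. 2 * pi * \<rho> / \<delta> ^ Suc K * cmod (h (circlepath 0 \<rho> t)))"
    using bound
    by (intro integral_norm_bound_integral[OF has_integral_integrable[OF G]]
        integrable_continuous_interval continuous_intros hc) auto
  also have "\<dots> = 2 * pi * \<rho> / \<delta> ^ Suc K * integral {0..1} (\<lambda>t. cmod (h (circlepath 0 \<rho> t)))"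
    by (simp add: integrable_continuous_interval continuous_intros hc)
  finally have "fact K / (2 * pi) * (2 * pi / fact K * cmod ((deriv ^^ K) h w))
      \<le> fact K / (2 * pi) * (2 * pi * \<rho> / \<delta> ^ Suc K * integral {0..1} (\<lambda>t. cmod (h (circlepath 0 \<rho> t))))"
    by (rule mult_left_mono) simp
  then show ?thesis unfolding \<delta>_def[symmetric] by simp
qed

(* Optimising over s in x \<le> (s y^2 + 1/s)/2 stands in for Cauchy-Schwarz, turning the L^1
   bound on the circle into an H^2 bound. *)
lemma le_of_forall_amgm_le:
  fixes x y :: real
  assumes amgm: "\<And>s. 0 < s \<Longrightarrow> x \<le> (s * y\<^sup>2 + 1 / s) / 2" and y: "0 \<le> y"
  shows "x \<le> y"
proof (cases "y = 0")
  case True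
  show ?thesis
  proof (rule ccontr)
    assume "\<not> x \<le> y"
    then have "0 < x" using True by simp
    then show False using amgm[of "1 / x"] True by simp
  qed
next
  case False
  then show ?thesis using amgm[of "1 / y"] y by (simp add: power2_eq_square)
qed

lemma H2_higher_deriv_bound:
  assumes w: "w \<in> ball 0 1"
  shows "\<exists>C\<ge>0. \<forall>h\<in>H2. cmod ((deriv ^^ K) h w) \<le> C * H2_norm h"
proof -
  define \<rho> where "\<rho> = (1 + cmod w) / 2"
  have "0 < \<rho>" "\<rho> < 1" "cmod w < \<rho>"
    using w unfolding \<rho>_def by (auto simp: add_pos_nonneg)
  then have \<rho>: "0 < \<rho>" "\<rho> < 1" "w \<in> ball 0 \<rho>" by auto
  define A where "A = fact K * \<rho> / (\<rho> - cmod w) ^ Suc K"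
  have A: "0 < A" unfolding A_def using \<rho> by simp
  have "cmod ((deriv ^^ K) h w) \<le> A * H2_norm h" if h: "h \<in> H2" for h
  proof -
    have cont: "continuous_on (cball 0 \<rho>) h"
      using \<rho>(2) by (intro continuous_on_subset[OF holomorphic_on_imp_continuous_on[OF H2_holomorphic[OF h]]]) auto
    have hc: "continuous_on {0..1} (\<lambda>t. h (circlepath 0 \<rho> t))"
      using \<rho>(1) by (intro continuous_on_circlepath_compose[OF cont]) simp
    have "h holomorphic_on ball 0 \<rho>"
      using \<rho>(2) by (intro holomorphic_on_subset[OF H2_holomorphic[OF h]]) auto
    then have "cmod ((deriv ^^ K) h w) \<le> A * integral {0..1} (\<lambda>t. cmod (h (circlepath 0 \<rho> t)))"
      unfolding A_def by (rule norm_higher_deriv_le_circle_integral[OF cont _ \<rho>(3)])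
    then have L1: "cmod ((deriv ^^ K) h w) / A \<le> integral {0..1} (\<lambda>t. cmod (h (circlepath 0 \<rho> t)))"
      using A by (simp add: pos_divide_le_eq mult.commute)
    have "cmod ((deriv ^^ K) h w) / A \<le> H2_norm h"
    proof (rule le_of_forall_amgm_le[OF _ H2_norm_nonneg[OF h]])
      fix s :: real assume s: "0 < s"
      note L1
      also have "integral {0..1} (\<lambda>t. cmod (h (circlepath 0 \<rho> t))) \<le> (s * H2_mean h \<rho> + 1 / s) / 2"
        using integral_norm_le_amgm[OF hc s] by (simp add: integral_circlepath_eq_H2_mean)
      also have "\<dots> \<le> (s * (H2_norm h)\<^sup>2 + 1 / s) / 2"
        using H2_mean_le_H2_norm[OF h \<rho>(1,2)] s by simp
      finally show "cmod ((deriv ^^ K) h w) / A \<le> (s * (H2_norm h)\<^sup>2 + 1 / s) / 2" .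
    qed
    then show ?thesis using A by (simp add: field_simps)
  qed
  then show ?thesis using A by (intro exI[of _ A]) auto
qed

lemma H2_opnorm_bound:
  assumes bdd: "bounded_on_H2 T"
    and hom: "\<And>f c z. f \<in> H2 \<Longrightarrow> z \<in> ball 0 1 \<Longrightarrow> T (\<lambda>z. c * f z) z = c * T f z"
  shows "0 \<le> H2_opnorm T" "\<And>f. f \<in> H2 \<Longrightarrow> H2_norm (T f) \<le> H2_opnorm T * H2_norm f"
proof -
  obtain C where TH: "\<And>f. f \<in> H2 \<Longrightarrow> T f \<in> H2"
    and TC: "\<And>f. f \<in> H2 \<Longrightarrow> H2_norm (T f) \<le> C * H2_norm f"
    using bdd unfolding bounded_on_H2_def by blast
  have "bdd_above {H2_norm (T f) | f. f \<in> H2 \<and> H2_norm f \<le> 1}"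
  proof (rule bdd_aboveI)
    fix x assume "x \<in> {H2_norm (T f) | f. f \<in> H2 \<and> H2_norm f \<le> 1}"
    then obtain f where f: "f \<in> H2" "H2_norm f \<le> 1" and x: "x = H2_norm (T f)" by blast
    have "C * H2_norm f \<le> max C 0 * H2_norm f"
      using H2_norm_nonneg[OF f(1)] by (intro mult_right_mono) auto
    also have "\<dots> \<le> max C 0"
      using f H2_norm_nonneg[OF f(1)] by (intro mult_left_le) auto
    finally show "x \<le> max C 0" using TC[OF f(1)] x by simp
  qed
  then have unit_ball: "H2_norm (T f) \<le> H2_opnorm T" if "f \<in> H2" "H2_norm f \<le> 1" for f
    unfolding H2_opnorm_def using that by (intro cSup_upper) auto
  have "(\<lambda>z. 0 * 1) \<in> H2" "H2_norm (\<lambda>z. 0 * 1) \<le> 0 * H2_norm (\<lambda>z. 1)"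
    using H2_mult_bounded[OF H2_const, of "\<lambda>z. 0" 0] by simp_all
  then have zero: "(\<lambda>z. 0) \<in> H2" "H2_norm (\<lambda>z. 0) \<le> 1" by simp_all
  show "0 \<le> H2_opnorm T"
    using unit_ball[OF zero] H2_norm_nonneg[OF TH[OF zero(1)]] by simp
  fix f assume f: "f \<in> H2"
  show "H2_norm (T f) \<le> H2_opnorm T * H2_norm f"
  proof (cases "H2_norm f = 0")
    case True
    then show ?thesis using TC[OF f] by simp
  next
    case False
    define N where "N = H2_norm f"
    have N: "0 < N" using False H2_norm_nonneg[OF f] unfolding N_def by simp
    define g where "g = (\<lambda>z. of_real (1 / N) * f z)"
    have g: "g \<in> H2" "H2_norm g \<le> 1"
      using H2_mult_bounded[OF f, of "\<lambda>z. of_real (1 / N)" "1 / N"] N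
      unfolding g_def N_def by (auto simp: norm_divide)
    have "T f z = of_real N * T g z" if "z \<in> ball 0 1" for z
      using hom[OF f that, of "of_real (1 / N)"] N unfolding g_def[symmetric] by simp
    then have "H2_norm (T f) = H2_norm (\<lambda>z. of_real N * T g z)"
      by (rule H2_norm_cong)
    also have "\<dots> \<le> N * H2_norm (T g)"
      using H2_mult_bounded[OF TH[OF g(1)], of "\<lambda>z. of_real N" N] N by simp
    also have "\<dots> \<le> N * H2_opnorm T"
      using unit_ball[OF g] N by simp
    finally show ?thesis unfolding N_def by (simp add: mult.commute)
  qed
qed

lemma Dop_cmult:
  assumes "\<phi> ` ball 0 1 \<subseteq> ball 0 1" "f holomorphic_on ball 0 1" "z \<in> ball 0 1"
  shows "Dop \<psi> \<phi> n (\<lambda>z. c * f z) z = c * Dop \<psi> \<phi> n f z"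
proof -
  have "\<phi> z \<in> ball 0 1" using assms(1,3) by blast
  then show ?thesis unfolding Dop_def using higher_deriv_cmult[OF assms(2) _ open_ball] by simp
qed

lemma Dop_bounded_by_opnorm:
  assumes "bounded_on_H2 (Dop \<psi> \<phi> n)" "\<phi> ` ball 0 1 \<subseteq> ball 0 1"
  shows "0 \<le> H2_opnorm (Dop \<psi> \<phi> n)"
    "\<And>f. f \<in> H2 \<Longrightarrow> Dop \<psi> \<phi> n f \<in> H2 \<and>
       H2_norm (Dop \<psi> \<phi> n f) \<le> H2_opnorm (Dop \<psi> \<phi> n) * H2_norm f"
  using H2_opnorm_bound[OF assms(1) Dop_cmult[OF assms(2) H2_holomorphic]] assms(1)
  unfolding bounded_on_H2_def by auto

lemma le_of_power_le_const_mult_power: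
  fixes x y A :: real
  assumes "0 \<le> x" "0 \<le> y" and le: "\<And>j. x ^ j \<le> A * y ^ j"
  shows "x \<le> y"
proof (rule ccontr)
  assume "\<not> x \<le> y"
  then have "y < x" by simp
  show False
  proof (cases "y = 0")
    case True
    then show False using le[of 1] \<open>y < x\<close> by simp
  next
    case False
    then have y: "0 < y" using assms(2) by simp
    obtain j where j: "A < (x / y) ^ j"
      using real_arch_pow[of "x / y" A] \<open>y < x\<close> y by auto
    have "A * y ^ j < (x / y) ^ j * y ^ j" using j y by simp
    also have "\<dots> = x ^ j" using y by (simp add: power_divide)
    finally show False using le[of j] by simp
  qed
qed

lemma has_power_factor_Dop:
  assumes \<psi>: "has_power_factor w a \<alpha> \<psi>" and \<phi>: "has_power_factor w b \<beta> (\<lambda>z. \<phi> z - w)"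
    and h: "has_power_factor w K c h" and nK: "n \<le> K"
    and \<phi>_self: "\<phi> ` ball 0 1 \<subseteq> ball 0 1" and fix_w: "\<phi> w = w"
  shows "has_power_factor w (a + b * (K - n)) (\<alpha> * (\<beta> ^ (K - n) * (fact K / fact (K - n) * c)))
           (Dop \<psi> \<phi> n h)"
  unfolding Dop_def
  by (intro has_power_factor_mult[OF \<psi>] has_power_factor_compose[OF _ \<phi> \<phi>_self fix_w]
      has_power_factor_higher_deriv[OF h nK])

lemma Dop_iterate_power_factor:
  assumes T: "\<And>f. f \<in> H2 \<Longrightarrow> Dop \<psi> \<phi> n f \<in> H2 \<and> H2_norm (Dop \<psi> \<phi> n f) \<le> M * H2_norm f"
    and M: "0 \<le> M"
    and \<psi>: "has_power_factor w a \<alpha> \<psi>" and \<phi>: "has_power_factor w b \<beta> (\<lambda>z. \<phi> z - w)"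
    and K: "a + b * (K - n) = K" "n \<le> K"
    and \<phi>_self: "\<phi> ` ball 0 1 \<subseteq> ball 0 1" and fix_w: "\<phi> w = w"
    and p: "p \<in> H2" "has_power_factor w K c p"
  defines "\<mu> \<equiv> fact K / fact (K - n) * \<alpha> * \<beta> ^ (K - n)"
  shows "(Dop \<psi> \<phi> n ^^ j) p \<in> H2 \<and> H2_norm ((Dop \<psi> \<phi> n ^^ j) p) \<le> M ^ j * H2_norm p
      \<and> has_power_factor w K (\<mu> ^ j * c) ((Dop \<psi> \<phi> n ^^ j) p)"
proof (induction j)
  case 0
  show ?case using p by simp
next
  case (Suc j)
  define f where "f = (Dop \<psi> \<phi> n ^^ j) p"
  have f: "f \<in> H2" "H2_norm f \<le> M ^ j * H2_norm p" "has_power_factor w K (\<mu> ^ j * c) f"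
    using Suc unfolding f_def by auto
  have "\<alpha> * (\<beta> ^ (K - n) * (fact K / fact (K - n) * (\<mu> ^ j * c))) = \<mu> ^ Suc j * c"
    by (simp add: \<mu>_def mult_ac)
  then have factor: "has_power_factor w K (\<mu> ^ Suc j * c) (Dop \<psi> \<phi> n f)"
    using has_power_factor_Dop[OF \<psi> \<phi> f(3) K(2) \<phi>_self fix_w] unfolding K(1) by simp
  have "H2_norm (Dop \<psi> \<phi> n f) \<le> M * H2_norm f"
    using T[OF f(1)] by blast
  also have "\<dots> \<le> M * (M ^ j * H2_norm p)"
    using f(2) M by (rule mult_left_mono)
  finally show ?case
    using T[OF f(1)] factor unfolding f_def by (simp add: mult_ac)
qed

lemma norm_Dop_multiplier_le:
  assumes T: "\<And>f. f \<in> H2 \<Longrightarrow> Dop \<psi> \<phi> n f \<in> H2 \<and> H2_norm (Dop \<psi> \<phi> n f) \<le> M * H2_norm f"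
    and M: "0 \<le> M"
    and \<psi>: "has_power_factor w a \<alpha> \<psi>" and \<phi>: "has_power_factor w b \<beta> (\<lambda>z. \<phi> z - w)"
    and K: "a + b * (K - n) = K" "n \<le> K"
    and \<phi>_self: "\<phi> ` ball 0 1 \<subseteq> ball 0 1" and fix_w: "\<phi> w = w" and w: "w \<in> ball 0 1"
  shows "cmod (fact K / fact (K - n) * \<alpha> * \<beta> ^ (K - n)) \<le> M"
proof -
  define \<mu> where "\<mu> = fact K / fact (K - n) * \<alpha> * \<beta> ^ (K - n)"
  define p where "p = (\<lambda>z::complex. ((z - w) / 2) ^ K)"
  have "(\<lambda>z. ((z - w) / 2) ^ K * 1) \<in> H2"
  proof (rule H2_mult_bounded(1)[OF H2_const])
    show "(\<lambda>z. ((z - w) / 2) ^ K) holomorphic_on ball 0 1" by (intro holomorphic_intros) auto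
    fix z :: complex assume "z \<in> ball 0 1"
    then have "cmod (z - w) \<le> 2"
      using w norm_triangle_ineq4[of z w] by simp
    then show "cmod (((z - w) / 2) ^ K) \<le> 1"
      by (simp add: norm_power norm_divide power_le_one)
  qed
  then have p_H2: "p \<in> H2" unfolding p_def by simp
  have p_factor: "has_power_factor w K (1 / 2 ^ K) p"
    unfolding has_power_factor_def p_def
    by (intro exI[of _ "\<lambda>z. 1 / 2 ^ K"]) (auto simp: power_divide)
  note iter = Dop_iterate_power_factor[OF T M \<psi> \<phi> K \<phi>_self fix_w p_H2 p_factor, folded \<mu>_def]
  obtain C where C: "0 \<le> C" "\<And>h. h \<in> H2 \<Longrightarrow> cmod ((deriv ^^ K) h w) \<le> C * H2_norm h"
    using H2_higher_deriv_bound[OF w, of K] by blast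
  have "cmod \<mu> ^ j \<le> (2 ^ K * C * H2_norm p / fact K) * M ^ j" for j
  proof -
    have "fact K * (cmod \<mu> ^ j / 2 ^ K) = cmod ((deriv ^^ K) ((Dop \<psi> \<phi> n ^^ j) p) w)"
      using higher_deriv_has_power_factor[OF conjunct2[OF conjunct2[OF iter]] w]
      by (simp add: norm_mult norm_divide norm_power)
    also have "\<dots> \<le> C * H2_norm ((Dop \<psi> \<phi> n ^^ j) p)" using C(2) iter by blast
    also have "\<dots> \<le> C * (M ^ j * H2_norm p)" using iter C(1) by (intro mult_left_mono) auto
    finally show ?thesis by (simp add: field_simps)
  qed
  then have "cmod \<mu> \<le> M"
    by (rule le_of_power_le_const_mult_power[OF norm_ge_zero M])
  then show ?thesis unfolding \<mu>_def .
qed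

lemma blaschke_denominator_nonzero:
  assumes "w \<in> ball (0::complex) 1" "z \<in> ball 0 1"
  shows "1 - cnj w * z \<noteq> 0"
proof -
  have "cmod (cnj w * z) \<le> cmod w"
    using assms by (simp add: norm_mult mult_left_le)
  then have "cmod (cnj w * z) < 1" using assms by simp
  then show ?thesis by auto
qed

lemma norm_blaschke_le_1:
  assumes "w \<in> ball (0::complex) 1" "z \<in> ball 0 1"
  shows "cmod ((w - z) / (1 - cnj w * z)) \<le> 1"
proof -
  have "cmod (Moebius_function 0 w z) < 1"
    using assms by (intro Moebius_function_norm_lt_1) auto
  then show ?thesis
    unfolding Moebius_function_simple by (simp add: norm_divide norm_minus_commute)
qed

lemma has_power_factor_blaschke:
  assumes w: "w \<in> ball 0 1"
  shows "has_power_factor w 1 (- 1 / (1 - cnj w * w)) (\<lambda>z. (w - z) / (1 - cnj w * z))"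
  unfolding has_power_factor_def
proof (intro exI conjI)
  show "(\<lambda>z. - 1 / (1 - cnj w * z)) holomorphic_on ball 0 1"
    using blaschke_denominator_nonzero[OF w] by (intro holomorphic_intros) auto
  show "\<forall>z\<in>ball 0 1. (w - z) / (1 - cnj w * z) = (z - w) ^ 1 * (- 1 / (1 - cnj w * z))"
    by (simp add: divide_simps)
qed simp

lemma chi_eq_mult_blaschke_power:
  assumes \<psi>: "\<psi> holomorphic_on ball 0 1" and w: "w \<in> ball 0 1"
  obtains e c where "e \<le> n" "has_power_factor w (n - e) c \<psi>"
    "chi \<psi> n w = (\<lambda>z. \<psi> z * ((w - z) / (1 - cnj w * z)) ^ e)"
proof (cases "\<forall>j<n. (deriv ^^ j) \<psi> w = 0")
  case True
  then show ?thesis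
    using that[of 0] has_power_factor_Taylor[OF \<psi> w, of n] by (simp add: chi_def)
next
  case vanishing: False
  show ?thesis
  proof (cases "\<psi> w = 0")
    case False
    then have "chi \<psi> n w = (\<lambda>z. \<psi> z * ((w - z) / (1 - cnj w * z)) ^ n)"
      unfolding chi_def by (simp only: if_not_P[OF vanishing] if_P[OF False] not_False_eq_True if_True)
    then show ?thesis
      using that[of n] has_power_factor_0[OF \<psi>, of w] by simp
  next
    case True
    define m where "m = (LEAST m. (deriv ^^ m) \<psi> w \<noteq> 0)"
    obtain j where "j < n" "(deriv ^^ j) \<psi> w \<noteq> 0" using vanishing by blast
    then have "m < n" unfolding m_def by (meson Least_le le_less_trans)
    have "(deriv ^^ i) \<psi> w = 0" if "i < m" for i
      using not_less_Least[of i "\<lambda>m. (deriv ^^ m) \<psi> w \<noteq> 0"] that unfolding m_def by blast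
    then have "has_power_factor w (n - (n - m)) ((deriv ^^ m) \<psi> w / fact m) \<psi>"
      using has_power_factor_Taylor[OF \<psi> w, of m] \<open>m < n\<close> by simp
    then show ?thesis
      using that[of "n - m"] vanishing True by (simp add: chi_def m_def Let_def)
  qed
qed

lemma Dop_mult_blaschke_power_bound:
  assumes T: "\<And>f. f \<in> H2 \<Longrightarrow> Dop \<psi> \<phi> n f \<in> H2 \<and> H2_norm (Dop \<psi> \<phi> n f) \<le> M * H2_norm f"
    and w: "w \<in> ball 0 1" and f: "f \<in> H2"
  shows "Dop (\<lambda>z. \<psi> z * ((w - z) / (1 - cnj w * z)) ^ e) \<phi> n f \<in> H2 \<and>
    H2_norm (Dop (\<lambda>z. \<psi> z * ((w - z) / (1 - cnj w * z)) ^ e) \<phi> n f) \<le> M * H2_norm f"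
proof -
  have eq: "Dop (\<lambda>z. \<psi> z * ((w - z) / (1 - cnj w * z)) ^ e) \<phi> n f
      = (\<lambda>z. ((w - z) / (1 - cnj w * z)) ^ e * Dop \<psi> \<phi> n f z)"
    unfolding Dop_def by (simp add: mult_ac)
  have hol: "(\<lambda>z. ((w - z) / (1 - cnj w * z)) ^ e) holomorphic_on ball 0 1"
    using blaschke_denominator_nonzero[OF w] by (intro holomorphic_intros) auto
  have "cmod (((w - z) / (1 - cnj w * z)) ^ e) \<le> 1" if "z \<in> ball 0 1" for z
    using norm_blaschke_le_1[OF w that] by (simp add: norm_power power_le_one)
  note product = H2_mult_bounded[OF conjunct1[OF T[OF f]] hol this]
  show ?thesis
    unfolding eq using product conjunct2[OF T[OF f]] by simp
qed

lemma has_power_factor_sub_fixed_point: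
  assumes \<phi>: "\<phi> holomorphic_on ball 0 1" and w: "w \<in> ball 0 1" and fix_w: "\<phi> w = w"
    and k: "0 < k" and vanish: "\<And>j. 0 < j \<Longrightarrow> j < k \<Longrightarrow> (deriv ^^ j) \<phi> w = 0"
  shows "has_power_factor w k ((deriv ^^ k) \<phi> w / fact k) (\<lambda>z. \<phi> z - w)"
proof -
  have deriv: "(deriv ^^ j) (\<lambda>z. \<phi> z - w) w = (deriv ^^ j) \<phi> w - (if j = 0 then w else 0)" for j
    using higher_deriv_diff[OF \<phi> holomorphic_on_const open_ball w, of j] by simp
  have "(\<lambda>z. \<phi> z - w) holomorphic_on ball 0 1" using \<phi> by (intro holomorphic_intros)
  from has_power_factor_Taylor[OF this w, of k]
  show ?thesis using deriv vanish fix_w k by (simp add: gr0_conv_Suc)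
qed

lemma opnorm_Dop_ge_chi_multiplier:
  assumes \<psi>: "\<psi> holomorphic_on ball 0 1" and \<phi>: "\<phi> holomorphic_on ball 0 1"
    and \<phi>_self: "\<phi> ` ball 0 1 \<subseteq> ball 0 1" and bdd: "bounded_on_H2 (Dop \<psi> \<phi> n)"
    and w: "w \<in> ball 0 1" and fix_w: "\<phi> w = w" and nK: "n \<le> K"
  shows "cmod ((deriv ^^ n) (chi \<psi> n w) w) * real (K choose n) * cmod (deriv \<phi> w) ^ (K - n)
    \<le> H2_opnorm (Dop \<psi> \<phi> n)"
proof -
  note M = Dop_bounded_by_opnorm[OF bdd \<phi>_self]
  obtain e c where e: "e \<le> n" "has_power_factor w (n - e) c \<psi>"
    and chi: "chi \<psi> n w = (\<lambda>z. \<psi> z * ((w - z) / (1 - cnj w * z)) ^ e)"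
    using chi_eq_mult_blaschke_power[OF \<psi> w] .
  define \<gamma> where "\<gamma> = c * (- 1 / (1 - cnj w * w)) ^ e"
  have "has_power_factor w (n - e + 1 * e) \<gamma> (chi \<psi> n w)"
    unfolding chi \<gamma>_def
    by (intro has_power_factor_mult[OF e(2)] has_power_factor_power has_power_factor_blaschke w)
  then have \<gamma>: "has_power_factor w n \<gamma> (chi \<psi> n w)" using e(1) by simp
  have \<phi>_factor: "has_power_factor w 1 (deriv \<phi> w) (\<lambda>z. \<phi> z - w)"
    using has_power_factor_sub_fixed_point[OF \<phi> w fix_w, of 1] by simp
  have chi_bdd: "Dop (chi \<psi> n w) \<phi> n f \<in> H2 \<and>
      H2_norm (Dop (chi \<psi> n w) \<phi> n f) \<le> H2_opnorm (Dop \<psi> \<phi> n) * H2_norm f" if "f \<in> H2" for f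
    unfolding chi using Dop_mult_blaschke_power_bound[OF M(2) w that] .
  have "n + 1 * (K - n) = K" using nK by simp
  from norm_Dop_multiplier_le[OF chi_bdd M(1) \<gamma> \<phi>_factor this nK \<phi>_self fix_w w]
  have "cmod (fact K / fact (K - n) * \<gamma> * deriv \<phi> w ^ (K - n)) \<le> H2_opnorm (Dop \<psi> \<phi> n)" .
  moreover have "(deriv ^^ n) (chi \<psi> n w) w = fact n * \<gamma>"
    by (rule higher_deriv_has_power_factor[OF \<gamma> w])
  moreover have "fact K / fact (K - n) = (of_nat (K choose n) * fact n :: complex)"
    using binomial_fact[OF nK, where 'a=complex] by (simp add: field_simps)
  ultimately show ?thesis by (simp add: norm_mult norm_power mult_ac)
qed

lemma opnorm_Dop_ge_second_deriv:
  assumes \<psi>: "\<psi> holomorphic_on ball 0 1" and \<phi>: "\<phi> holomorphic_on ball 0 1"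
    and \<phi>_self: "\<phi> ` ball 0 1 \<subseteq> ball 0 1" and bdd: "bounded_on_H2 (Dop \<psi> \<phi> 1)"
    and w: "w \<in> ball 0 1" and fix_w: "\<phi> w = w" and critical: "deriv \<phi> w = 0"
  shows "cmod (\<psi> w * (deriv ^^ 2) \<phi> w) \<le> H2_opnorm (Dop \<psi> \<phi> 1)"
proof -
  note M = Dop_bounded_by_opnorm[OF bdd \<phi>_self]
  have "has_power_factor w 2 ((deriv ^^ 2) \<phi> w / 2) (\<lambda>z. \<phi> z - w)"
    using has_power_factor_sub_fixed_point[OF \<phi> w fix_w, of 2] critical
    by (simp add: less_2_cases_iff)
  from norm_Dop_multiplier_le[OF M(2) M(1) has_power_factor_0[OF \<psi>] this, of 2] w \<phi>_self fix_w
  show ?thesis by (simp add: norm_mult)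
qed

theorem proposition3p1:
  fixes \<psi> \<phi> :: "complex \<Rightarrow> complex" and n :: nat and w :: complex
  assumes n_pos: "n \<ge> 1"
    and \<psi>_hol: "\<psi> holomorphic_on ball 0 1"
    and \<phi>_hol: "\<phi> holomorphic_on ball 0 1"
    and \<phi>_self: "\<phi> ` ball 0 1 \<subseteq> ball 0 1"
    and bdd: "bounded_on_H2 (Dop \<psi> \<phi> n)"
    and w_in: "w \<in> ball 0 1"
    and fix_w: "\<phi> w = w"
  defines "N \<equiv> nat \<lfloor>real n / (1 - cmod (deriv \<phi> w))\<rfloor>"
  shows "(deriv \<phi> w \<noteq> 0 \<longrightarrow>
            H2_opnorm (Dop \<psi> \<phi> n) \<ge>
              cmod ((deriv ^^ n) (chi \<psi> n w) w) * real (N choose n) * cmod (deriv \<phi> w) ^ (N - n))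
       \<and> (deriv \<phi> w = 0 \<longrightarrow>
            H2_opnorm (Dop \<psi> \<phi> n) \<ge> cmod ((deriv ^^ n) (chi \<psi> n w) w))
       \<and> (deriv \<phi> w = 0 \<and> (deriv ^^ 2) \<psi> w = 0 \<and> n = 1 \<longrightarrow>
            H2_opnorm (Dop \<psi> \<phi> 1) \<ge>
              max (cmod (deriv (chi \<psi> 1 w) w)) (cmod (\<psi> w * (deriv ^^ 2) \<phi> w)))"
proof -
  note M = Dop_bounded_by_opnorm[OF bdd \<phi>_self]
  have bound: "cmod ((deriv ^^ n) (chi \<psi> n w) w) * real (K choose n) * cmod (deriv \<phi> w) ^ (K - n)
      \<le> H2_opnorm (Dop \<psi> \<phi> n)" if "n \<le> K" for K
    by (rule opnorm_Dop_ge_chi_multiplier[OF \<psi>_hol \<phi>_hol \<phi>_self bdd w_in fix_w that])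
  have i: "cmod ((deriv ^^ n) (chi \<psi> n w) w) * real (N choose n) * cmod (deriv \<phi> w) ^ (N - n)
      \<le> H2_opnorm (Dop \<psi> \<phi> n)"
    using bound[of N] M(1) by (cases "n \<le> N") (simp_all add: binomial_eq_0)
  have ii: "deriv \<phi> w = 0 \<Longrightarrow> cmod ((deriv ^^ n) (chi \<psi> n w) w) \<le> H2_opnorm (Dop \<psi> \<phi> n)"
    using bound[of n] by simp
  have "cmod (\<psi> w * (deriv ^^ 2) \<phi> w) \<le> H2_opnorm (Dop \<psi> \<phi> 1)"
    if "deriv \<phi> w = 0" "n = 1"
    using opnorm_Dop_ge_second_deriv[OF \<psi>_hol \<phi>_hol \<phi>_self _ w_in fix_w that(1)] bdd that(2) by simp
  with i ii show ?thesis by auto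
qed

end
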